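(* For every $z_0,z_1\in\ell'$, $k\in\mathbb{Z}\setminus\{0\}$ and every $u\in\hat{\mathcal H}^k_{z_0z_1}$, $$\min_{s\in[0,1]}|u(s)|>L\exp\!\left(-\frac{\mathcal L(u)}{\sqrt\beta}\right),$$ where $L=\operatorname{dist}(0,\ell)$.
   Context: Fix $L,h,\beta>0$, $V_\beta(z)=-\frac1{|z|}-\frac{\beta}{|z|^2}$, $\ell=\{y=-L\}$, $\mathcal P=\{y>-L\}$. Winding number: for $u:[a,b]\to\overline{\mathcal P}$ with $u(a),u(b)\in\ell$, $u(s)\in\mathcal P\setminus\{0\}$ on $(a,b)$, $\operatorname{Ind}(u)$ is the winding number around $0$ of the closed curve formed by $u$ followed by the oriented segment from $u(b)$ to $u(a)$. Fix a solution $\hat{\mathcal Z}$ of $\ddot z=-\nabla V_\beta(z)$ at energy $h$ ($\frac12|\dot z|^2+V_\beta(z)=h$) meeting $\ell$ at times $t_0<t_1$, in $\mathcal P$ on $(t_0,t_1)$, with winding number $1$ on $[t_0,t_1]$, the angle between $\dot{\hat{\mathcal Z}}(t_0)$ and $(1,0)$ less than $\pi/2$ and the angle between $(-1,0)$ and $\dot{\hat{\mathcal Z}}(t_1)$ greater than $\pi/2$. $\ell'$ is the segment of $\ell$ between $\hat{\mathcal Z}(t_0)$ and $\hat{\mathcal Z}(t_1)$, $D$ the compact region bounded by $\hat{\mathcal Z}([t_0,t_1])$ and $\ell'$. $\hat{\mathcal H}^k_{z_0z_1}=\{u\in H^1([0,1],D):u(0)=z_0,u(1)=z_1,u(s)\ne0\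 \forall s,\operatorname{Ind}(u)=k\}$. The Jacobi length of a collision-free $u$ is $\mathcal L(u)=\int_0^1|\dot u(s)|\sqrt{h-V_\beta(u(s))}\,ds$. *)

theory Defs
  imports "HOL-Complex_Analysis.Complex_Analysis"
begin

definition V_beta :: "real \<Rightarrow> complex \<Rightarrow> real" where
  "V_beta \<beta> z = - 1 / cmod z - \<beta> / (cmod z)^2"

definition grad_V_beta :: "real \<Rightarrow> complex \<Rightarrow> complex" where
  "grad_V_beta \<beta> z = of_real (1 / (cmod z)^3 + 2 * \<beta> / (cmod z)^4) * z"

definition vec_angle :: "complex \<Rightarrow> complex \<Rightarrow> real" where
  "vec_angle u v = arccos ((u \<bullet> v) / (cmod u * cmod v))"

definition Ind :: "real \<Rightarrow> real \<Rightarrow> (real \<Rightarrow> complex) \<Rightarrow> complex" where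
  "Ind a b u = winding_number ((\<lambda>s. u (a + s * (b - a))) +++ linepath (u b) (u a)) 0"

definition region_D :: "real \<Rightarrow> real \<Rightarrow> (real \<Rightarrow> complex) \<Rightarrow> complex set" where
  "region_D t0 t1 Z =
     (let \<Gamma> = (\<lambda>s. Z (t0 + s * (t1 - t0))) +++ linepath (Z t1) (Z t0)
      in path_image \<Gamma> \<union> inside (path_image \<Gamma>))"

text \<open>g is a weak derivative of u on [0,1] in the H^1 sense: g is square integrable
  and u is the integral of g.\<close>
definition H1_deriv :: "(real \<Rightarrow> complex) \<Rightarrow> (real \<Rightarrow> complex) \<Rightarrow> bool" where
  "H1_deriv u g \<longleftrightarrow>
     g absolutely_integrable_on {0..1} \<and>
     (\<lambda>s. (cmod (g s))^2) integrable_on {0..1} \<and>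
     (\<forall>t\<in>{0..1}. (g has_integral (u t - u 0)) {0..t})"

definition H1 :: "(real \<Rightarrow> complex) \<Rightarrow> bool" where
  "H1 u \<longleftrightarrow> (\<exists>g. H1_deriv u g)"

definition H_hat :: "complex set \<Rightarrow> int \<Rightarrow> complex \<Rightarrow> complex \<Rightarrow> (real \<Rightarrow> complex) set" where
  "H_hat D k z0 z1 = {u. H1 u \<and> (\<forall>s\<in>{0..1}. u s \<in> D) \<and> u 0 = z0 \<and> u 1 = z1 \<and>
                         (\<forall>s\<in>{0..1}. u s \<noteq> 0) \<and> Ind 0 1 u = of_int k}"

text \<open>Jacobi length, computed with the (a.e. defined) derivative g of u.\<close>
definition jacobi_length :: "real \<Rightarrow> real \<Rightarrow> (real \<Rightarrow> complex) \<Rightarrow> (real \<Rightarrow> complex) \<Rightarrow> real" where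
  "jacobi_length h \<beta> u g = integral {0..1} (\<lambda>s. cmod (g s) * sqrt (h - V_beta \<beta> (u s)))"

end

theory Submission
  imports Defs
begin

(* Let r be the minimum of |u| and Phi the integral of |u'|/|u| over [0,1]. Since |u| is
   absolutely continuous, ln |u(0)| - ln r <= Phi. As h >= 0 and |u| >= r, the Jacobi integrand
   satisfies sqrt (h - V_beta u) >= sqrt (beta + r) / |u|, so the Jacobi length is at least
   sqrt (beta + r) Phi, which exceeds sqrt beta Phi unless Phi = 0, i.e. unless u is constant;
   but a constant curve has winding number 0. Finally |u(0)| >= L since u(0) lies on the line
   Im z = -L. *)

lemma continuous_mult_absolutely_integrable:
  fixes f G :: "real \<Rightarrow> real"
  assumes f: "continuous_on {a..b} f" and G: "G absolutely_integrable_on {a..b}"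
  shows "(\<lambda>x. f x * G x) absolutely_integrable_on {a..b}"
  using absolutely_integrable_bounded_measurable_product_real[OF _ _ _ G]
    continuous_imp_measurable_on_sets_lebesgue[OF f]
    compact_imp_bounded[OF compact_continuous_image[OF f]]
  by auto

lemma telescoping_le_integral:
  fixes F q :: "real \<Rightarrow> real"
  assumes "a \<le> b" and q: "q integrable_on {a..b}" and "0 < d"
    and short: "\<And>x y. a \<le> x \<Longrightarrow> x \<le> y \<Longrightarrow> y \<le> b \<Longrightarrow> y - x < d \<Longrightarrow>
                  F x - F y \<le> integral {x..y} q"
  shows "F a - F b \<le> integral {a..b} q"
proof -
  have "F a - F y \<le> integral {a..y} q" if "a \<le> y" "y \<le> b" "y - a \<le> real n * (d/2)" for n y
    using that
  proof (induction n arbitrary: y)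
    case 0
    then show ?case by simp
  next
    case (Suc n)
    show ?case
    proof (cases "y - a < d")
      case True
      then show ?thesis using short Suc.prems by simp
    next
      case False
      define x where "x = y - d/2"
      have x: "a \<le> x" "x \<le> y" "x - a \<le> real n * (d/2)"
        using False Suc.prems \<open>0 < d\<close> by (auto simp: x_def algebra_simps)
      have "integral {a..x} q + integral {x..y} q = integral {a..y} q"
        using Suc.prems
        by (intro Henstock_Kurzweil_Integration.integral_combine x integrable_on_subinterval[OF q]) auto
      moreover have "F x - F y \<le> integral {x..y} q"
        using x Suc.prems \<open>0 < d\<close> by (intro short) (auto simp: x_def)
      ultimately show ?thesis using Suc.IH[OF x(1) _ x(3)] x Suc.prems by simp
    qed
  qed
  moreover obtain n where "(b - a) / (d/2) \<le> real n"
    using real_arch_simple by blast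
  ultimately show ?thesis using \<open>a \<le> b\<close> \<open>0 < d\<close> by (simp add: field_simps)
qed

lemma ln_decrease_le_scaled_integral:
  fixes f G :: "real \<Rightarrow> real"
  assumes G: "G integrable_on {x..y}" and Q: "(\<lambda>t. G t / f t) integrable_on {x..y}"
    and G_nonneg: "\<And>t. t \<in> {x..y} \<Longrightarrow> 0 \<le> G t"
    and f_pos: "\<And>t. t \<in> {x..y} \<Longrightarrow> 0 < f t" and f_le: "\<And>t. t \<in> {x..y} \<Longrightarrow> f t \<le> c * f y"
    and "x \<le> y" and decrease: "f x - f y \<le> integral {x..y} G"
  shows "ln (f x) - ln (f y) \<le> c * integral {x..y} (\<lambda>t. G t / f t)"
proof -
  have fx: "0 < f x" and fy: "0 < f y" using f_pos \<open>x \<le> y\<close> by auto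
  have "ln (f x) - ln (f y) \<le> f x / f y - 1"
    using fx fy ln_le_minus_one[of "f x / f y"] by (simp add: ln_div)
  also have "\<dots> = (f x - f y) / f y"
    using fy by (simp add: field_simps)
  also have "\<dots> \<le> integral {x..y} G / f y"
    using decrease fy by (intro divide_right_mono) auto
  also have "\<dots> = integral {x..y} (\<lambda>t. G t / f y)"
    by simp
  also have "\<dots> \<le> integral {x..y} (\<lambda>t. c * (G t / f t))"
  proof (rule integral_le)
    show "(\<lambda>t. G t / f y) integrable_on {x..y}"
      using G by (rule integrable_on_divide)
    show "(\<lambda>t. c * (G t / f t)) integrable_on {x..y}"
      using Q by (rule integrable_on_mult_right)
    fix t assume t: "t \<in> {x..y}"
    then have "G t * f t \<le> G t * (c * f y)"
      using G_nonneg f_le by (intro mult_left_mono) auto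
    then show "G t / f y \<le> c * (G t / f t)"
      using f_pos[OF t] fy by (simp add: field_simps)
  qed
  also have "\<dots> = c * integral {x..y} (\<lambda>t. G t / f t)"
    by (rule integral_mult_right)
  finally show ?thesis .
qed

lemma ln_decrease_le_integral:
  fixes f G :: "real \<Rightarrow> real"
  assumes "a \<le> b" and f: "continuous_on {a..b} f" and f_pos: "\<And>t. t \<in> {a..b} \<Longrightarrow> 0 < f t"
    and G: "G integrable_on {a..b}" and G_nonneg: "\<And>t. t \<in> {a..b} \<Longrightarrow> 0 \<le> G t"
    and decrease: "\<And>x y. a \<le> x \<Longrightarrow> x \<le> y \<Longrightarrow> y \<le> b \<Longrightarrow> f x - f y \<le> integral {x..y} G"
  shows "ln (f a) - ln (f b) \<le> integral {a..b} (\<lambda>t. G t / f t)"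
proof -
  define I where "I = integral {a..b} (\<lambda>t. G t / f t)"
  obtain s where s: "s \<in> {a..b}" "\<And>t. t \<in> {a..b} \<Longrightarrow> f s \<le> f t"
    using continuous_attains_inf[OF compact_Icc _ f] \<open>a \<le> b\<close> by auto
  define r where "r = f s"
  have "0 < r" using f_pos s(1) by (simp add: r_def)
  have "continuous_on {a..b} (\<lambda>t. 1 / f t)"
    using f f_pos by (intro continuous_intros) (auto simp: less_imp_neq[symmetric])
  from continuous_mult_absolutely_integrable[OF this nonnegative_absolutely_integrable_1[OF G G_nonneg]]
  have Q: "(\<lambda>t. G t / f t) integrable_on {a..b}"
    by (simp add: absolutely_integrable_on_def)
  have "0 \<le> I"
    unfolding I_def using Q f_pos G_nonneg by (intro integral_nonneg) (auto intro: divide_nonneg_pos)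
  \<comment> \<open>f need not be differentiable, so instead of a chain rule for ln o f the bound is proved
    up to a factor 1 + eps on short intervals, where f varies by less than eps * r, and summed.\<close>
  have approx: "ln (f a) - ln (f b) \<le> (1 + \<epsilon>) * I" if "0 < \<epsilon>" for \<epsilon>
  proof -
    obtain d where d: "0 < d"
      "\<And>x y. x \<in> {a..b} \<Longrightarrow> y \<in> {a..b} \<Longrightarrow> dist y x < d \<Longrightarrow> dist (f y) (f x) < \<epsilon> * r"
      using uniformly_continuous_onE[OF compact_uniformly_continuous[OF f compact_Icc]] \<open>0 < \<epsilon>\<close> \<open>0 < r\<close>
      by (metis mult_pos_pos)
    have "ln (f a) - ln (f b) \<le> integral {a..b} (\<lambda>t. (1 + \<epsilon>) * (G t / f t))"
    proof (rule telescoping_le_integral[OF \<open>a \<le> b\<close> _ d(1)])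
      show "(\<lambda>t. (1 + \<epsilon>) * (G t / f t)) integrable_on {a..b}"
        using Q by (rule integrable_on_mult_right)
      fix x y assume xy: "a \<le> x" "x \<le> y" "y \<le> b" "y - x < d"
      then have sub: "{x..y} \<subseteq> {a..b}" by auto
      have "f t \<le> (1 + \<epsilon>) * f y" if "t \<in> {x..y}" for t
      proof -
        have "f t < f y + \<epsilon> * r"
          using d(2)[of y t] xy that by (auto simp: dist_real_def)
        also have "\<dots> \<le> (1 + \<epsilon>) * f y"
          using s(2)[of y] xy \<open>0 < \<epsilon>\<close> by (simp add: r_def algebra_simps)
        finally show ?thesis by simp
      qed
      with xy sub f_pos G_nonneg decrease[OF xy(1-3)]
        integrable_on_subinterval[OF G sub] integrable_on_subinterval[OF Q sub]
      have "ln (f x) - ln (f y) \<le> (1 + \<epsilon>) * integral {x..y} (\<lambda>t. G t / f t)"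
        by (intro ln_decrease_le_scaled_integral) auto
      then show "ln (f x) - ln (f y) \<le> integral {x..y} (\<lambda>t. (1 + \<epsilon>) * (G t / f t))"
        by (simp only: integral_mult_right)
    qed
    also have "\<dots> = (1 + \<epsilon>) * I"
      unfolding I_def by (rule integral_mult_right)
    finally show ?thesis .
  qed
  show ?thesis
    unfolding I_def[symmetric]
  proof (rule field_le_epsilon)
    fix e :: real assume "0 < e"
    have "ln (f a) - ln (f b) \<le> (1 + e / (I + 1)) * I"
      using approx \<open>0 < e\<close> \<open>0 \<le> I\<close> by simp
    also have "\<dots> \<le> I + e"
      using \<open>0 < e\<close> \<open>0 \<le> I\<close> by (simp add: field_simps)
    finally show "ln (f a) - ln (f b) \<le> I + e" .
  qed
qed

lemma H1_deriv_integrable: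
  assumes "H1_deriv u g"
  shows "g integrable_on {0..1}" and "(\<lambda>t. cmod (g t)) integrable_on {0..1}"
  using assms unfolding H1_deriv_def absolutely_integrable_on_def by auto

lemma H1_deriv_increment:
  assumes H: "H1_deriv u g" and "0 \<le> a" "a \<le> b" "b \<le> 1"
  shows "u b - u a = integral {a..b} g"
proof -
  have primitive: "integral {0..t} g = u t - u 0" if "t \<in> {0..1}" for t
    using H that unfolding H1_deriv_def by (blast intro: integral_unique)
  have "integral {0..a} g + integral {a..b} g = integral {0..b} g"
    using assms by (intro Henstock_Kurzweil_Integration.integral_combine
        integrable_on_subinterval[OF H1_deriv_integrable(1)[OF H]]) auto
  then have "u a + integral {a..b} g = u b"
    using primitive[of a] primitive[of b] assms by (simp add: eq_diff_eq)
  then show ?thesis by (metis add_diff_cancel_left')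
qed

lemma H1_deriv_continuous:
  assumes H: "H1_deriv u g"
  shows "continuous_on {0..1} u"
proof (rule continuous_on_eq)
  show "continuous_on {0..1} (\<lambda>t. u 0 + integral {0..t} g)"
    using H1_deriv_integrable(1)[OF H] by (intro continuous_intros indefinite_integral_continuous_1)
  show "u 0 + integral {0..t} g = u t" if "t \<in> {0..1}" for t
    using H1_deriv_increment[OF H, of 0 t, symmetric] that by (simp add: eq_diff_eq')
qed

lemma H1_deriv_norm_increment_le:
  assumes H: "H1_deriv u g" and "0 \<le> a" "a \<le> b" "b \<le> 1"
  shows "cmod (u b - u a) \<le> integral {a..b} (\<lambda>t. cmod (g t))"
proof -
  have "{a..b} \<subseteq> {0..1}" using assms by auto
  then show ?thesis
    unfolding H1_deriv_increment[OF assms]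
    by (intro integral_norm_bound_integral integrable_on_subinterval[OF H1_deriv_integrable(1)[OF H]]
        integrable_on_subinterval[OF H1_deriv_integrable(2)[OF H]]) auto
qed

lemma H1_deriv_continuous_mult_integrable:
  assumes "H1_deriv u g" and "continuous_on {0..1} \<phi>"
  shows "(\<lambda>t. \<phi> t * cmod (g t)) integrable_on {0..1}"
proof -
  have "(\<lambda>t. cmod (g t)) absolutely_integrable_on {0..1}"
    using H1_deriv_integrable(2)[OF assms(1)] by (rule nonnegative_absolutely_integrable_1) simp
  from continuous_mult_absolutely_integrable[OF assms(2) this] show ?thesis
    by (simp add: absolutely_integrable_on_def)
qed

lemma H1_deriv_norm_ratio_integrable:
  assumes "H1_deriv u g" and "\<forall>s\<in>{0..1}. u s \<noteq> 0"
  shows "(\<lambda>t. cmod (g t) / cmod (u t)) integrable_on {0..1}"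
proof -
  have "continuous_on {0..1} (\<lambda>t. 1 / cmod (u t))"
    using H1_deriv_continuous[OF assms(1)] assms(2) by (intro continuous_intros) auto
  from H1_deriv_continuous_mult_integrable[OF assms(1) this] show ?thesis
    by simp
qed

lemma ln_norm_decrease_le_integral:
  assumes H: "H1_deriv u g" and nz: "\<forall>s\<in>{0..1}. u s \<noteq> 0" and "s \<in> {0..1}"
  shows "ln (cmod (u 0)) - ln (cmod (u s)) \<le> integral {0..1} (\<lambda>t. cmod (g t) / cmod (u t))"
proof -
  have sub: "{0..s} \<subseteq> {0..1}" using \<open>s \<in> {0..1}\<close> by auto
  have "ln (cmod (u 0)) - ln (cmod (u s)) \<le> integral {0..s} (\<lambda>t. cmod (g t) / cmod (u t))"
  proof (rule ln_decrease_le_integral)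
    show "continuous_on {0..s} (\<lambda>t. cmod (u t))"
      using continuous_on_subset[OF H1_deriv_continuous[OF H] sub] by (intro continuous_intros)
    show "(\<lambda>t. cmod (g t)) integrable_on {0..s}"
      using integrable_on_subinterval[OF H1_deriv_integrable(2)[OF H] sub] .
    show "cmod (u x) - cmod (u y) \<le> integral {x..y} (\<lambda>t. cmod (g t))" if "0 \<le> x" "x \<le> y" "y \<le> s" for x y
      using H1_deriv_norm_increment_le[OF H that(1,2)] that \<open>s \<in> {0..1}\<close> norm_triangle_ineq2[of "u x" "u y"]
      by (auto simp: norm_minus_commute)
  qed (use \<open>s \<in> {0..1}\<close> nz in auto)
  also have "\<dots> \<le> integral {0..1} (\<lambda>t. cmod (g t) / cmod (u t))"
    using sub by (intro integral_subset_le integrable_on_subinterval[OF H1_deriv_norm_ratio_integrable[OF H nz]]) auto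
  finally show ?thesis .
qed

lemma sqrt_div_norm_le_sqrt_h_minus_V_beta:
  assumes "0 \<le> h" and "z \<noteq> 0" and "r \<le> cmod z"
  shows "sqrt (\<beta> + r) / cmod z \<le> sqrt (h - V_beta \<beta> z)"
proof -
  have m: "0 < cmod z" using assms by simp
  have "r / (cmod z)^2 \<le> cmod z / (cmod z)^2"
    using assms by (intro divide_right_mono) auto
  also have "\<dots> = 1 / cmod z"
    using m by (simp add: power2_eq_square)
  finally have "r / (cmod z)^2 \<le> 1 / cmod z" .
  then have "(\<beta> + r) / (cmod z)^2 \<le> h - V_beta \<beta> z"
    using assms by (simp add: V_beta_def add_divide_distrib)
  then have "sqrt ((\<beta> + r) / (cmod z)^2) \<le> sqrt (h - V_beta \<beta> z)"
    by (rule real_sqrt_le_mono)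
  then show ?thesis by (simp add: real_sqrt_divide)
qed

lemma jacobi_length_ge:
  assumes H: "H1_deriv u g" and nz: "\<forall>s\<in>{0..1}. u s \<noteq> 0"
    and r: "\<forall>s\<in>{0..1}. r \<le> cmod (u s)" and "0 \<le> h"
  shows "sqrt (\<beta> + r) * integral {0..1} (\<lambda>t. cmod (g t) / cmod (u t)) \<le> jacobi_length h \<beta> u g"
proof -
  have "continuous_on {0..1} (\<lambda>t. sqrt (h - V_beta \<beta> (u t)))"
    unfolding V_beta_def using H1_deriv_continuous[OF H] nz by (intro continuous_intros) auto
  from H1_deriv_continuous_mult_integrable[OF H this]
  have J: "(\<lambda>t. cmod (g t) * sqrt (h - V_beta \<beta> (u t))) integrable_on {0..1}"
    by (simp add: mult.commute)
  have "sqrt (\<beta> + r) * integral {0..1} (\<lambda>t. cmod (g t) / cmod (u t))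
      = integral {0..1} (\<lambda>t. sqrt (\<beta> + r) * (cmod (g t) / cmod (u t)))"
    by (rule integral_mult_right[symmetric])
  also have "\<dots> \<le> jacobi_length h \<beta> u g"
    unfolding jacobi_length_def
  proof (rule integral_le[OF _ J])
    show "(\<lambda>t. sqrt (\<beta> + r) * (cmod (g t) / cmod (u t))) integrable_on {0..1}"
      using H1_deriv_norm_ratio_integrable[OF H nz] by (rule integrable_on_mult_right)
    fix t :: real assume "t \<in> {0..1}"
    then have "cmod (g t) * (sqrt (\<beta> + r) / cmod (u t)) \<le> cmod (g t) * sqrt (h - V_beta \<beta> (u t))"
      using sqrt_div_norm_le_sqrt_h_minus_V_beta[OF \<open>0 \<le> h\<close>] nz r by (intro mult_left_mono) auto
    then show "sqrt (\<beta> + r) * (cmod (g t) / cmod (u t)) \<le> cmod (g t) * sqrt (h - V_beta \<beta> (u t))"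
      by (simp add: ac_simps)
  qed
  finally show ?thesis .
qed

lemma H1_deriv_norm_ratio_integral_pos:
  assumes H: "H1_deriv u g" and nz: "\<forall>s\<in>{0..1}. u s \<noteq> 0"
    and "s \<in> {0..1}" and "u s \<noteq> u 0"
  shows "0 < integral {0..1} (\<lambda>t. cmod (g t) / cmod (u t))"
proof -
  obtain R where R: "\<forall>t\<in>{0..1}. cmod (u t) \<le> R"
    using compact_imp_bounded[OF compact_continuous_image[OF H1_deriv_continuous[OF H] compact_Icc]]
    by (auto simp: bounded_iff)
  have "0 < cmod (u s - u 0)"
    using \<open>u s \<noteq> u 0\<close> by simp
  also have "\<dots> \<le> integral {0..s} (\<lambda>t. cmod (g t))"
    using H1_deriv_norm_increment_le[OF H] \<open>s \<in> {0..1}\<close> by simp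
  also have "\<dots> \<le> integral {0..1} (\<lambda>t. cmod (g t))"
    using \<open>s \<in> {0..1}\<close> by (intro integral_subset_le integrable_on_subinterval[OF H1_deriv_integrable(2)[OF H]]) auto
  also have "\<dots> \<le> integral {0..1} (\<lambda>t. R * (cmod (g t) / cmod (u t)))"
  proof (rule integral_le[OF H1_deriv_integrable(2)[OF H]])
    show "(\<lambda>t. R * (cmod (g t) / cmod (u t))) integrable_on {0..1}"
      using H1_deriv_norm_ratio_integrable[OF H nz] by (rule integrable_on_mult_right)
    fix t :: real assume t: "t \<in> {0..1}"
    then have "cmod (u t) * (cmod (g t) / cmod (u t)) \<le> R * (cmod (g t) / cmod (u t))"
      using R by (intro mult_right_mono) auto
    then show "cmod (g t) \<le> R * (cmod (g t) / cmod (u t))"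
      using nz t by simp
  qed
  also have "\<dots> = R * integral {0..1} (\<lambda>t. cmod (g t) / cmod (u t))"
    by (rule integral_mult_right)
  finally have "0 < R * integral {0..1} (\<lambda>t. cmod (g t) / cmod (u t))" .
  moreover have "0 \<le> R"
    using R[rule_format, of 0] by (auto intro: order_trans[OF norm_ge_zero])
  ultimately show ?thesis
    by (simp add: zero_less_mult_iff)
qed

lemma min_norm_gt_exp_jacobi_length:
  assumes H: "H1_deriv u g" and nz: "\<forall>s\<in>{0..1}. u s \<noteq> 0"
    and nonconst: "\<exists>s\<in>{0..1}. u s \<noteq> u 0" and "0 \<le> h" and "0 < \<beta>"
  shows "cmod (u 0) * exp (- jacobi_length h \<beta> u g / sqrt \<beta>) < Inf ((\<lambda>s. cmod (u s)) ` {0..1})"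
proof -
  define \<Phi> where "\<Phi> = integral {0..1} (\<lambda>t. cmod (g t) / cmod (u t))"
  define J where "J = jacobi_length h \<beta> u g"
  obtain s where s: "s \<in> {0..1}" "\<And>t. t \<in> {0..1} \<Longrightarrow> cmod (u s) \<le> cmod (u t)"
    using continuous_attains_inf[OF compact_Icc _ continuous_on_norm[OF H1_deriv_continuous[OF H]]]
    by auto
  define r where "r = cmod (u s)"
  have "0 < r" using nz s(1) by (simp add: r_def)
  have Inf_eq: "Inf ((\<lambda>s. cmod (u s)) ` {0..1}) = r"
    unfolding r_def using s by (intro cInf_eq_minimum) auto
  have "0 < \<Phi>"
    using nonconst H1_deriv_norm_ratio_integral_pos[OF H nz] by (auto simp: \<Phi>_def)
  then have "sqrt \<beta> * \<Phi> < sqrt (\<beta> + r) * \<Phi>"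
    using \<open>0 < r\<close> by (intro mult_strict_right_mono) auto
  also have "\<dots> \<le> J"
    using jacobi_length_ge[OF H nz _ \<open>0 \<le> h\<close>] s by (simp add: \<Phi>_def J_def r_def)
  finally have "\<Phi> < J / sqrt \<beta>"
    using \<open>0 < \<beta>\<close> by (simp add: field_simps)
  moreover have "ln (cmod (u 0)) - ln r \<le> \<Phi>"
    unfolding \<Phi>_def r_def using ln_norm_decrease_le_integral[OF H nz s(1)] .
  ultimately have "ln (cmod (u 0)) - J / sqrt \<beta> < ln r"
    by simp
  then have "exp (ln (cmod (u 0)) - J / sqrt \<beta>) < r"
    using \<open>0 < r\<close> by (metis exp_less_cancel_iff exp_ln)
  moreover have "exp (ln (cmod (u 0)) - J / sqrt \<beta>) = cmod (u 0) * exp (- J / sqrt \<beta>)"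
    using nz by (simp add: exp_diff exp_minus divide_inverse)
  ultimately show ?thesis
    by (simp add: Inf_eq J_def)
qed

lemma Ind_eq_0_if_constant:
  assumes "\<And>s. s \<in> {0..1} \<Longrightarrow> u s = c" and "c \<noteq> 0"
  shows "Ind 0 1 u = 0"
  unfolding Ind_def
  by (rule winding_number_constI[OF \<open>c \<noteq> 0\<close>]) (auto simp: joinpaths_def linepath_def assms(1))

lemma Im_eq_on_closed_segment:
  assumes "z \<in> closed_segment a b" and "Im a = c" and "Im b = c"
  shows "Im z = c"
proof -
  obtain t where "z = (1 - t) *\<^sub>R a + t *\<^sub>R b"
    using assms(1) by (auto simp: in_segment)
  then have "Im z = (1 - t) * Im a + t * Im b"
    by simp
  then show ?thesis
    using assms(2,3) by (simp add: algebra_simps)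
qed

theorem lemma2p10:
  fixes L h \<beta> t0 t1 :: real and Z Z' :: "real \<Rightarrow> complex"
  assumes "L > 0" and "h > 0" and "\<beta> > 0" and "t0 < t1"
    and "\<forall>t\<in>{t0..t1}. Z t \<noteq> 0"
    and "\<forall>t\<in>{t0..t1}. (Z has_vector_derivative Z' t) (at t within {t0..t1})"
    and "\<forall>t\<in>{t0..t1}. (Z' has_vector_derivative (- grad_V_beta \<beta> (Z t))) (at t within {t0..t1})"
    and "\<forall>t\<in>{t0..t1}. (cmod (Z' t))^2 / 2 + V_beta \<beta> (Z t) = h"
    and "Im (Z t0) = - L" and "Im (Z t1) = - L"
    and "\<forall>t\<in>{t0<..<t1}. Im (Z t) > - L"
    and "Ind t0 t1 Z = 1"
    and "vec_angle (Z' t0) 1 < pi / 2"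
    and "vec_angle (- 1) (Z' t1) > pi / 2"
  shows "\<forall>z0\<in>closed_segment (Z t0) (Z t1). \<forall>z1\<in>closed_segment (Z t0) (Z t1).
           \<forall>k::int. k \<noteq> 0 \<longrightarrow>
           (\<forall>u\<in>H_hat (region_D t0 t1 Z) k z0 z1. \<forall>g. H1_deriv u g \<longrightarrow>
              Inf ((\<lambda>s. cmod (u s)) ` {0..1}) > L * exp (- jacobi_length h \<beta> u g / sqrt \<beta>))"
proof (intro ballI allI impI)
  fix z0 z1 :: complex and k :: int and u g :: "real \<Rightarrow> complex"
  assume z0: "z0 \<in> closed_segment (Z t0) (Z t1)" and "k \<noteq> 0"
    and u: "u \<in> H_hat (region_D t0 t1 Z) k z0 z1" and H: "H1_deriv u g"
  have "u 0 = z0" and nz: "\<forall>s\<in>{0..1}. u s \<noteq> 0" and "Ind 0 1 u = of_int k"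
    using u unfolding H_hat_def by auto
  have "L \<le> cmod (u 0)"
    using Im_eq_on_closed_segment[OF z0 assms(9,10)] \<open>u 0 = z0\<close> abs_Im_le_cmod[of z0] \<open>L > 0\<close>
    by simp
  have "\<exists>s\<in>{0..1}. u s \<noteq> u 0"
  proof (rule ccontr)
    assume "\<not> ?thesis"
    then have "u s = u 0" if "s \<in> {0..1}" for s
      using that by blast
    moreover have "u 0 \<noteq> 0"
      using nz by simp
    ultimately have "Ind 0 1 u = 0"
      by (rule Ind_eq_0_if_constant)
    with \<open>Ind 0 1 u = of_int k\<close> \<open>k \<noteq> 0\<close> show False by simp
  qed
  from min_norm_gt_exp_jacobi_length[OF H nz this] \<open>h > 0\<close> \<open>\<beta> > 0\<close>
  have "cmod (u 0) * exp (- jacobi_length h \<beta> u g / sqrt \<beta>) < Inf ((\<lambda>s. cmod (u s)) ` {0..1})"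
    by simp
  moreover have "L * exp (- jacobi_length h \<beta> u g / sqrt \<beta>) \<le> cmod (u 0) * exp (- jacobi_length h \<beta> u g / sqrt \<beta>)"
    using \<open>L \<le> cmod (u 0)\<close> by (intro mult_right_mono) auto
  ultimately show "Inf ((\<lambda>s. cmod (u s)) ` {0..1}) > L * exp (- jacobi_length h \<beta> u g / sqrt \<beta>)"
    by (rule le_less_trans[rotated])
qed

end
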